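(* In the multi-parameter setting described in the context, if there is a POVM $\{M_m\}$ with $F_M(\theta)=C_\Upsilon(\theta)$, then the channel satisfies $\langle w_j^{(l)}(\theta)|w_k(\theta)\rangle=0$ for all $j,k,l$ with $p_j(\theta),p_k(\theta)>0$, and there exists a POVM $\{M_m\}$ and real numbers $\xi_m^{(j)}(\theta)$ such that $M_m^{1/2}\lambda^{(j)}\rho_{out}^{1/2}=\xi_m^{(j)}(\theta)M_m^{1/2}\rho_{out}^{1/2}$ for all $m,j$.
   Context: A multi-parameter quantum channel on density matrices on $\mathbb{C}^d$ is $\rho_0\mapsto\sum_kE_k(\theta)\rho_0E_k(\theta)^\dagger$ with $\theta=(\theta^1,\dots,\theta^m)\in\mathbb{R}^m$, Kraus operators differentiable, $\sum_kE_k^\dagger E_k=I$. The input is a fixed pure state $\rho_0=|\psi_0\rangle\langle\psi_0|$. Canonical Kraus operators $\{\Upsilon_k(\theta)\}_{k=1}^d$: a differentiable Kraus representation of the same channel with $\mathrm{tr}\{\Upsilon_k\rho_0\Upsilon_j^\dagger\}=\delta_{jk}p_k(\theta)$; the output is $\rho_{out}(\theta)=\sum_kp_k|w_k\rangle\langle w_k|$ with $\{|w_k(\theta)\rangle\}$ an orthonormal basis differentiable in $\theta$ and $|w_k\rangle=p_k^{-1/2}\Upsilon_k|\psi_0\rangle$ when $p_k>0$. Write $X^{(j)}=\partial X/\partial\theta^j$. $C_\Upsilon(\theta)_{jk}=4\sum_l\mathrm{Re}\,\mathrm{tr}\{\Upsilon_l^{(j)}\rho_0\Upsilon_l^{(k)\dagger}\}$.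 $\lambda^{(j)}$ is a self-adjoint solution of $\partial\rho_{out}/\partial\theta^j=\frac12(\rho_{out}\lambda^{(j)}+\lambda^{(j)}\rho_{out})$. For a POVM $\{M_m\}$ with $p(m;\theta)=\mathrm{tr}\{\rho_{out}M_m\}$, the Fisher information matrix is $F_M(\theta)_{jk}=\sum_m p(m;\theta)^{-1}\partial_jp(m;\theta)\,\partial_kp(m;\theta)$. *)

theory Defs
  imports "HOL-Analysis.Analysis"
begin

type_synonym ('d) cmat = "complex ^ 'd ^ 'd"

definition cinner :: "complex ^ 'd \<Rightarrow> complex ^ 'd \<Rightarrow> complex" where
  "cinner a b = (\<Sum>i\<in>UNIV. cnj (a $ i) * b $ i)"

definition outer :: "complex ^ 'd \<Rightarrow> complex ^ 'd \<Rightarrow> complex ^ 'd ^ 'd" where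
  "outer a b = (\<chi> i j. a $ i * cnj (b $ j))"

definition adj :: "complex ^ 'd ^ 'd \<Rightarrow> complex ^ 'd ^ 'd" where
  "adj A = (\<chi> i j. cnj (A $ j $ i))"

definition mtrace :: "complex ^ 'd ^ 'd \<Rightarrow> complex" where
  "mtrace A = (\<Sum>i\<in>UNIV. A $ i $ i)"

definition psd :: "complex ^ 'd ^ 'd \<Rightarrow> bool" where
  "psd A \<longleftrightarrow> adj A = A \<and> (\<forall>x. 0 \<le> Re (cinner x (A *v x)))"

definition msqrt :: "complex ^ 'd ^ 'd \<Rightarrow> complex ^ 'd ^ 'd" where
  "msqrt A = (THE S. psd S \<and> S ** S = A)"

definition povm :: "('o::finite \<Rightarrow> complex ^ 'd ^ 'd) \<Rightarrow> bool" where
  "povm M \<longleftrightarrow> (\<forall>m. psd (M m)) \<and> (\<Sum>m\<in>UNIV. M m) = mat 1"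

definition pd :: "(real ^ 'p \<Rightarrow> 'v::real_normed_vector) \<Rightarrow> 'p \<Rightarrow> real ^ 'p \<Rightarrow> 'v" where
  "pd f j \<theta> = vector_derivative (\<lambda>t. f (\<theta> + t *\<^sub>R axis j 1)) (at 0)"

definition channel :: "('k::finite \<Rightarrow> complex ^ 'd ^ 'd) \<Rightarrow> complex ^ 'd ^ 'd \<Rightarrow> complex ^ 'd ^ 'd" where
  "channel E \<rho> = (\<Sum>k\<in>UNIV. E k ** \<rho> ** adj (E k))"

definition kraus :: "('k::finite \<Rightarrow> complex ^ 'd ^ 'd) \<Rightarrow> bool" where
  "kraus E \<longleftrightarrow> (\<Sum>k\<in>UNIV. adj (E k) ** E k) = mat 1"

text \<open>Outcome probability p(m;theta) = tr(rho_out M_m) (real since both are Hermitian).\<close>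
definition outprob :: "complex ^ 'd ^ 'd \<Rightarrow> complex ^ 'd ^ 'd \<Rightarrow> real" where
  "outprob \<rho> M = Re (mtrace (\<rho> ** M))"

text \<open>Classical Fisher information matrix F_M(theta) (terms with p = 0 contribute 0,
  by the convention x / 0 = 0).\<close>
definition fisher :: "(real ^ 'p \<Rightarrow> complex ^ 'd ^ 'd) \<Rightarrow> ('o::finite \<Rightarrow> complex ^ 'd ^ 'd)
    \<Rightarrow> real ^ 'p \<Rightarrow> 'p \<Rightarrow> 'p \<Rightarrow> real" where
  "fisher \<rho> M \<theta> j k = (\<Sum>m\<in>UNIV.
      pd (\<lambda>t. outprob (\<rho> t) (M m)) j \<theta> * pd (\<lambda>t. outprob (\<rho> t) (M m)) k \<theta>
        / outprob (\<rho> \<theta>) (M m))"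

definition CUps :: "('d \<Rightarrow> real ^ 'p \<Rightarrow> complex ^ 'd ^ 'd) \<Rightarrow> complex ^ 'd ^ 'd
    \<Rightarrow> real ^ 'p \<Rightarrow> 'p \<Rightarrow> 'p \<Rightarrow> real" where
  "CUps U \<rho>0 \<theta> j k = 4 * (\<Sum>l\<in>UNIV. Re (mtrace (pd (U l) j \<theta> ** \<rho>0 ** adj (pd (U l) k \<theta>))))"

end

theory Submission
  imports Defs
begin

text \<open>Write v_k = \<Upsilon>_k \<psi>0 = \<surd>p_k w_k, so that \<rho>_out = \<Sum>_k v_k v_k^\<dagger> with orthogonal v_k
  and C_\<Upsilon> is 4 \<Sum>_k |\<partial>_l v_k|^2 on the diagonal. For every outcome m, Cauchy-Schwarz in the
  semi-inner product of M_m bounds the Fisher contribution (\<partial>_l p_m)^2 / p_m by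
  4 \<Sum>_k \<langle>\<partial>_l v_k, M_m \<partial>_l v_k\<rangle>, and these bounds add up to C_\<Upsilon>. Equality therefore forces
  \<surd>M_m (\<partial>_l v_k - c_lm v_k) = 0 for real constants c_lm. Summing over m gives
  \<partial>_l v_k = \<Sum>_m c_lm M_m v_k, so \<langle>\<partial>_l v_j, v_k\<rangle> is Hermitian in (j, k), while differentiating
  \<langle>v_j, v_k\<rangle> = 0 makes it skew-Hermitian for j \<noteq> k; hence it vanishes off the diagonal and is
  real on it, which yields \<langle>\<partial>_l w_j, w_k\<rangle> = 0. The same facts turn the SLD equation into
  \<lambda>_l v_k = 2 \<partial>_l v_k, and with \<surd>\<rho>_out = \<Sum>_k p_k^(-1/2) v_k v_k^\<dagger> this gives
  \<surd>M_m \<lambda>_l \<surd>\<rho>_out = 2 c_lm \<surd>M_m \<surd>\<rho>_out.\<close>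

section \<open>Complex inner and outer products\<close>

lemma scaleR_complex: "r *\<^sub>R (z::complex) = of_real r * z"
  by (simp add: scaleR_conv_of_real)

lemma cinner_zero_left [simp]: "cinner 0 c = 0"
  by (simp add: cinner_def)

lemma cinner_zero_right [simp]: "cinner c 0 = 0"
  by (simp add: cinner_def)

lemma cinner_add_left: "cinner (a + b) c = cinner a c + cinner b c"
  by (simp add: cinner_def sum.distrib distrib_right)

lemma cinner_add_right: "cinner c (a + b) = cinner c a + cinner c b"
  by (simp add: cinner_def sum.distrib distrib_left)

lemma cinner_diff_right: "cinner c (a - b) = cinner c a - cinner c b"
  by (simp add: cinner_def sum_subtractf right_diff_distrib)

lemma cinner_scaleR_left: "cinner (r *\<^sub>R a) c = of_real r * cinner a c"
  by (simp add: cinner_def sum_distrib_left scaleR_complex mult.assoc)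

lemma cinner_scaleR_right: "cinner c (r *\<^sub>R a) = of_real r * cinner c a"
  by (simp add: cinner_def sum_distrib_left scaleR_complex mult_ac)

lemma cinner_smult_left: "cinner (z *s a) c = cnj z * cinner a c"
  by (simp add: cinner_def sum_distrib_left vector_scalar_mult_def mult.assoc)

lemma cinner_smult_right: "cinner c (z *s a) = z * cinner c a"
  by (simp add: cinner_def sum_distrib_left vector_scalar_mult_def mult_ac)

lemma cinner_sum_left: "cinner (\<Sum>i\<in>I. f i) c = (\<Sum>i\<in>I. cinner (f i) c)"
  by (induct I rule: infinite_finite_induct) (simp_all add: cinner_add_left)

lemma cinner_sum_right: "cinner c (\<Sum>i\<in>I. f i) = (\<Sum>i\<in>I. cinner c (f i))"
  by (induct I rule: infinite_finite_induct) (simp_all add: cinner_add_right)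

lemma cnj_cinner: "cnj (cinner x y) = cinner y x"
  by (simp add: cinner_def mult.commute)

lemma cinner_commute_zero: "cinner x y = 0 \<longleftrightarrow> cinner y x = 0"
  by (metis cnj_cinner complex_cnj_zero)

lemma Re_cinner: "Re (cinner x y) = inner x y"
  by (simp add: cinner_def inner_vec_def inner_complex_def)

lemma cinner_self: "cinner x x = of_real ((norm x)\<^sup>2)"
proof -
  have "cinner x x = (\<Sum>i\<in>UNIV. of_real ((cmod (x$i))\<^sup>2))"
    unfolding cinner_def by (intro sum.cong) (auto simp: complex_norm_square[symmetric] mult.commute)
  also have "\<dots> = of_real ((norm x)\<^sup>2)" by (simp add: norm_vec_def L2_set_def sum_nonneg del: Re_sum)
  finally show ?thesis .
qed

lemma cinner_mult_cinner: "cinner b x * cinner x b = of_real ((cmod (cinner b x))\<^sup>2)"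
  by (metis cnj_cinner complex_norm_square)

lemma cinner_adj: "cinner x (A *v y) = cinner (adj A *v x) y"
proof -
  have "cinner x (A *v y) = (\<Sum>i\<in>UNIV. \<Sum>j\<in>UNIV. cnj (x$i) * A$i$j * y$j)"
    by (simp add: cinner_def matrix_vector_mult_def sum_distrib_left mult.assoc)
  also have "\<dots> = (\<Sum>j\<in>UNIV. \<Sum>i\<in>UNIV. cnj (x$i) * A$i$j * y$j)"
    by (rule sum.swap)
  also have "\<dots> = cinner (adj A *v x) y"
    by (simp add: cinner_def adj_def matrix_vector_mult_def sum_distrib_right sum_distrib_left mult_ac)
  finally show ?thesis .
qed

lemma hermitian_cinner: "adj A = A \<Longrightarrow> cinner x (A *v y) = cinner (A *v x) y"
  by (metis cinner_adj)

lemma hermitian_inner: "adj A = A \<Longrightarrow> inner x (A *v y) = inner (A *v x) y"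
  by (metis cinner_adj Re_cinner)

lemma hermitian_cinner_self_real: "adj A = A \<Longrightarrow> cinner x (A *v x) = of_real (inner x (A *v x))"
  by (metis Re_cinner Reals_cnj_iff cnj_cinner complex_is_Real_iff complex_eq_iff
      hermitian_cinner of_real_Re)

lemma outer_mult_v: "outer a b *v x = cinner b x *s a"
  by (simp add: outer_def cinner_def matrix_vector_mult_def vector_scalar_mult_def vec_eq_iff
      sum_distrib_left mult_ac)

lemma sandwich_outer: "A ** outer a b ** adj B = outer (A *v a) (B *v b)"
  by (simp add: outer_def adj_def matrix_matrix_mult_def matrix_vector_mult_def vec_eq_iff
      sum_distrib_left sum_distrib_right mult_ac)

lemma mtrace_outer: "mtrace (outer a b) = cinner b a"
  by (simp add: mtrace_def outer_def cinner_def mult.commute)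

lemma mtrace_outer_mult: "mtrace (outer a b ** A) = cinner b (A *v a)"
  unfolding mtrace_def outer_def cinner_def matrix_matrix_mult_def matrix_vector_mult_def
  by (simp add: sum_distrib_left mult_ac) (rule sum.swap)

lemma adj_outer: "adj (outer a b) = outer b a"
  by (simp add: adj_def outer_def vec_eq_iff)

lemma adj_sum: "adj (\<Sum>i\<in>I. f i) = (\<Sum>i\<in>I. adj (f i))"
  by (induct I rule: infinite_finite_induct) (simp_all add: adj_def vec_eq_iff)

lemma adj_scaleR: "adj (r *\<^sub>R A) = r *\<^sub>R adj A"
  by (simp add: adj_def vec_eq_iff)

lemma mtrace_sum: "mtrace (\<Sum>i\<in>I. f i) = (\<Sum>i\<in>I. mtrace (f i))"
  by (induct I rule: infinite_finite_induct) (simp_all add: mtrace_def sum.distrib)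

lemma matrix_vector_mult_smult: "(A::complex^'n^'m) *v (c *s x) = c *s (A *v x)"
  by (simp add: matrix_vector_mult_def vector_scalar_mult_def vec_eq_iff sum_distrib_left mult_ac)

lemma matrix_vector_mult_scaleR_right: "(A::complex^'n^'m) *v (r *\<^sub>R x) = r *\<^sub>R (A *v x)"
  by (simp add: matrix_vector_mult_def vec_eq_iff scaleR_complex sum_distrib_left mult_ac)

lemma matrix_vector_mult_scaleR_left: "(r *\<^sub>R A) *v (x::complex^'n) = r *\<^sub>R (A *v x)"
  by (simp add: matrix_vector_mult_def vec_eq_iff scaleR_complex sum_distrib_left mult_ac)

lemma matrix_vector_mult_sum_right: "(A::complex^'n^'m) *v (\<Sum>i\<in>I. f i) = (\<Sum>i\<in>I. A *v f i)"
  by (induct I rule: infinite_finite_induct) (auto simp: matrix_vector_right_distrib)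

lemma matrix_vector_mult_sum_left: "(\<Sum>i\<in>I. f i) *v (x::complex^'n) = (\<Sum>i\<in>I. f i *v x)"
  by (induct I rule: infinite_finite_induct) (auto simp: matrix_vector_mult_add_rdistrib)

lemma matrix_mult_sum_left: "(\<Sum>i\<in>I. f i) ** (B :: complex ^ 'n ^ 'n) = (\<Sum>i\<in>I. f i ** B)"
  by (simp add: matrix_matrix_mult_def vec_eq_iff sum_distrib_right) (intro allI sum.swap)

lemma matrix_mult_scaleR_left: "(r *\<^sub>R A) ** (B :: complex ^ 'n ^ 'n) = r *\<^sub>R (A ** B)"
  by (simp add: matrix_matrix_mult_def vec_eq_iff scaleR_complex sum_distrib_left mult.assoc)

lemma smult_of_real: "of_real r *s x = r *\<^sub>R (x::complex^'n)"
  by (simp add: vector_scalar_mult_def scaleR_complex vec_eq_iff)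

lemma smult_Re_Im: "c *s b = Re c *\<^sub>R b + Im c *\<^sub>R (\<i> *s (b::complex^'d))"
  by (simp add: vector_scalar_mult_def vec_eq_iff scaleR_complex complex_eq_iff)

lemma bounded_bilinear_cinner: "bounded_bilinear cinner"
  unfolding bilinear_conv_bounded_bilinear[symmetric] bilinear_def linear_iff
  by (auto simp: cinner_add_left cinner_add_right cinner_scaleR_left cinner_scaleR_right
      scaleR_complex)

lemma bounded_bilinear_outer: "bounded_bilinear outer"
  unfolding bilinear_conv_bounded_bilinear[symmetric] bilinear_def linear_iff
  by (auto simp: outer_def vec_eq_iff distrib_left distrib_right scaleR_complex mult_ac)

lemma bounded_linear_matrix_vector_mult_left: "bounded_linear (\<lambda>A. (A::complex^'n^'m) *v x)"
  unfolding linear_conv_bounded_linear[symmetric] linear_iff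
  by (auto simp: matrix_vector_mult_add_rdistrib matrix_vector_mult_scaleR_left)

lemma bounded_linear_matrix_vector_mult_right: "bounded_linear (\<lambda>x. (A::complex^'n^'m) *v x)"
  by (simp add: linear_conv_bounded_linear)

lemma psd_inner: "psd A \<Longrightarrow> inner x (A *v x) \<ge> 0"
  by (simp add: psd_def Re_cinner)

lemma psd_hermitian: "psd A \<Longrightarrow> adj A = A"
  by (simp add: psd_def)

section \<open>Orthonormal sets\<close>

definition corthonormal :: "(complex ^ 'd) set \<Rightarrow> bool" where
  "corthonormal S \<longleftrightarrow> (\<forall>a\<in>S. \<forall>b\<in>S. cinner a b = (if a = b then 1 else 0))"

lemma inner_smult_corthonormal:
  assumes "corthonormal S" "a \<in> S" "b \<in> S" "\<alpha> \<in> {1, \<i>}" "\<beta> \<in> {1, \<i>}"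
  shows "inner (\<alpha> *s a) (\<beta> *s b) = (if a = b \<and> \<alpha> = \<beta> then 1 else 0)"
  using assms by (auto simp: Re_cinner[symmetric] cinner_smult_left cinner_smult_right corthonormal_def)

text \<open>Dimension arguments in the library are over the reals, where complex^'d has dimension
  2 CARD('d); a complex orthonormal set S gives the real orthonormal set S \<union> \<i>S.\<close>
lemma corthonormal_realification:
  assumes "corthonormal S" "finite S"
  defines "T \<equiv> (\<lambda>(\<alpha>, b). \<alpha> *s b) ` ({1, \<i>} \<times> S)"
  shows "independent T" "card T = 2 * card S"
proof -
  have inj: "inj_on (\<lambda>(\<alpha>, b). \<alpha> *s b) ({1, \<i>} \<times> S)"
  proof (rule inj_onI, clarify)
    fix \<alpha> a \<beta> b
    assume ab: "\<alpha> \<in> {1, \<i>}" "a \<in> S" "\<beta> \<in> {1, \<i>}" "b \<in> S" and eq: "\<alpha> *s a = \<beta> *s b"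
    have "inner (\<alpha> *s a) (\<alpha> *s a) = 1"
      using inner_smult_corthonormal[OF assms(1) ab(2) ab(2) ab(1) ab(1)] by simp
    then have "inner (\<alpha> *s a) (\<beta> *s b) \<noteq> 0"
      by (simp only: eq)
    then show "\<alpha> = \<beta> \<and> a = b"
      using inner_smult_corthonormal[OF assms(1) ab(2) ab(4) ab(1) ab(3)] by argo
  qed
  then show "card T = 2 * card S"
    by (simp add: T_def card_image card_cartesian_product)
  have T_elem: "\<exists>\<alpha> a. \<alpha> \<in> {1, \<i>} \<and> a \<in> S \<and> x = \<alpha> *s a" if "x \<in> T" for x
    using that unfolding T_def by auto
  show "independent T"
  proof (rule pairwise_orthogonal_independent)
    show "pairwise orthogonal T"
    proof (rule pairwiseI)
      fix x y assume "x \<in> T" "y \<in> T" "x \<noteq> y"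
      with T_elem obtain \<alpha> a \<beta> b where "\<alpha> \<in> {1, \<i>}" "a \<in> S" "\<beta> \<in> {1, \<i>}" "b \<in> S"
        and "x = \<alpha> *s a" "y = \<beta> *s b"
        by meson
      then show "orthogonal x y"
        using \<open>x \<noteq> y\<close> inner_smult_corthonormal[OF assms(1), of a b \<alpha> \<beta>] by (auto simp: orthogonal_def)
    qed
    have "inner x x = 1" if "x \<in> T" for x
      using T_elem[OF that] inner_smult_corthonormal[OF assms(1)] by force
    then show "0 \<notin> T"
      by force
  qed
qed

lemma corthonormal_card_le:
  assumes "corthonormal (S :: (complex ^ 'd) set)" "finite S"
  shows "card S \<le> CARD('d)"
  using corthonormal_realification[OF assms] independent_bound[of "(\<lambda>(\<alpha>, b). \<alpha> *s b) ` ({1, \<i>} \<times> S)"]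
  by simp

lemma cinner_corthonormal_residual:
  assumes "corthonormal S" "finite S" "b \<in> S"
  shows "cinner b (x - (\<Sum>a\<in>S. cinner a x *s a)) = 0"
proof -
  have "cinner b (\<Sum>a\<in>S. cinner a x *s a) = (\<Sum>a\<in>S. if a = b then cinner b x else 0)"
    using assms(1,3) by (auto simp: cinner_sum_right cinner_smult_right corthonormal_def intro: sum.cong)
  then show ?thesis
    using assms(2,3) by (simp add: cinner_diff_right)
qed

lemma corthonormal_insert:
  assumes "corthonormal S" "cinner u u = 1" "\<forall>b\<in>S. cinner b u = 0"
  shows "corthonormal (insert u S)" "u \<notin> S"
  using assms cinner_commute_zero by (force simp: corthonormal_def)+

lemma corthonormal_exists_orthogonal:
  assumes "corthonormal (S :: (complex ^ 'd) set)" "finite S" "card S < CARD('d)"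
  shows "\<exists>x. x \<noteq> 0 \<and> (\<forall>b\<in>S. cinner b x = 0)"
proof -
  define T where "T = (\<lambda>(\<alpha>, b). \<alpha> *s b) ` ({1, \<i>} \<times> S)"
  have "span T \<noteq> UNIV"
  proof
    assume "span T = UNIV"
    then have "dim (UNIV :: (complex ^ 'd) set) \<le> card T"
      using dim_le_card[of UNIV T] assms(2) by (simp add: T_def)
    then show False
      using corthonormal_realification[OF assms(1,2)] assms(3) by (simp add: T_def)
  qed
  then obtain x where x: "x \<notin> span T" by blast
  have "cinner b x *s b \<in> span T" if "b \<in> S" for b
  proof -
    have "b \<in> span T" "\<i> *s b \<in> span T"
      using that by (force simp: T_def intro: span_base)+
    then show ?thesis
      by (subst smult_Re_Im) (intro span_add span_scale)
  qed
  then have "(\<Sum>b\<in>S. cinner b x *s b) \<in> span T"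
    by (intro span_sum)
  then have "x - (\<Sum>b\<in>S. cinner b x *s b) \<noteq> 0"
    using x by auto
  then show ?thesis
    using cinner_corthonormal_residual[OF assms(1,2)] by blast
qed

lemma corthonormal_expansion:
  assumes "corthonormal (S :: (complex ^ 'd) set)" "finite S" "card S = CARD('d)"
  shows "x = (\<Sum>b\<in>S. cinner b x *s b)"
proof (rule ccontr)
  define y where "y = x - (\<Sum>b\<in>S. cinner b x *s b)"
  define u where "u = (1 / norm y) *\<^sub>R y"
  assume "x \<noteq> (\<Sum>b\<in>S. cinner b x *s b)"
  then have "y \<noteq> 0"
    by (simp add: y_def)
  then have "cinner u u = 1"
    by (simp add: u_def cinner_scaleR_left cinner_scaleR_right cinner_self power2_eq_square)
  moreover have "\<forall>b\<in>S. cinner b u = 0"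
    using cinner_corthonormal_residual[OF assms(1,2)] by (simp add: u_def y_def cinner_scaleR_right)
  ultimately show False
    using corthonormal_insert[OF assms(1)] corthonormal_card_le[of "insert u S"] assms(2,3) by simp
qed

lemma matrix_eq_on_corthonormal_basis:
  fixes X Y :: "complex ^ 'd ^ 'd"
  assumes "corthonormal S" "finite S" "card S = CARD('d)" "\<And>b. b \<in> S \<Longrightarrow> X *v b = Y *v b"
  shows "X = Y"
proof (subst matrix_eq, intro allI)
  fix x
  have "X *v x = X *v (\<Sum>b\<in>S. cinner b x *s b)"
    using corthonormal_expansion[OF assms(1-3)] by metis
  also have "\<dots> = Y *v (\<Sum>b\<in>S. cinner b x *s b)"
    using assms(4) by (simp add: matrix_vector_mult_sum_right matrix_vector_mult_smult)
  also have "\<dots> = Y *v x"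
    using corthonormal_expansion[OF assms(1-3)] by metis
  finally show "X *v x = Y *v x" .
qed

section \<open>The spectral theorem for Hermitian matrices\<close>

lemma real_nonpos_of_quadratic_bound:
  fixes n b :: real
  assumes "\<And>t. t > 0 \<Longrightarrow> 2 * t * n + t\<^sup>2 * b \<le> 0"
  shows "n \<le> 0"
proof (rule ccontr)
  assume "\<not> n \<le> 0"
  define t where "t = n / (\<bar>b\<bar> + n)"
  have "t > 0"
    using \<open>\<not> n \<le> 0\<close> by (simp add: t_def)
  have "t * \<bar>b\<bar> < n"
    using \<open>\<not> n \<le> 0\<close> by (simp add: t_def divide_less_eq mult.commute[of _ "\<bar>b\<bar>"])
  have "- (t\<^sup>2 * \<bar>b\<bar>) \<le> t\<^sup>2 * b"
    using mult_left_mono[of "- \<bar>b\<bar>" b "t\<^sup>2"] by simp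
  moreover have "t\<^sup>2 * \<bar>b\<bar> < t * n"
    using \<open>t > 0\<close> \<open>t * \<bar>b\<bar> < n\<close> by (simp add: power2_eq_square mult.assoc)
  moreover have "0 < t * n"
    using \<open>t > 0\<close> \<open>\<not> n \<le> 0\<close> by simp
  ultimately show False
    using assms[OF \<open>t > 0\<close>] by linarith
qed

text \<open>First-order condition for a maximiser of the Rayleigh quotient on an invariant subspace:
  moving from x0 along the residual z = A x0 - \<mu> x0 increases the quotient to first order
  by 2 t |z|^2.\<close>
lemma hermitian_maximizer_eigenvector:
  fixes A :: "complex ^ 'd ^ 'd"
  assumes h: "adj A = A" and W: "subspace W" "\<And>x. x \<in> W \<Longrightarrow> A *v x \<in> W"
    and x0: "x0 \<in> W" "norm x0 = 1"
    and max: "\<And>y. y \<in> W \<Longrightarrow> norm y = 1 \<Longrightarrow> inner y (A *v y) \<le> inner x0 (A *v x0)"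
  shows "A *v x0 = inner x0 (A *v x0) *\<^sub>R x0"
proof -
  define \<mu> where "\<mu> = inner x0 (A *v x0)"
  define z where "z = A *v x0 - \<mu> *\<^sub>R x0"
  have "z \<in> W"
    unfolding z_def using W x0(1) by (intro subspace_diff subspace_scale) auto
  have "cinner x0 z = 0"
    using hermitian_cinner_self_real[OF h, of x0] x0(2)
    by (simp add: z_def cinner_diff_right cinner_scaleR_right cinner_self \<mu>_def)
  then have x0z: "inner x0 z = 0" "inner z x0 = 0"
    by (metis Re_cinner zero_complex.sel(1), metis Re_cinner inner_commute zero_complex.sel(1))
  have Az: "inner z (A *v x0) = inner z z" "inner x0 (A *v z) = inner z z"
    using x0z hermitian_inner[OF h, of x0 z]
    by (simp_all add: z_def inner_diff_right inner_commute)
  have "2 * t * inner z z + t\<^sup>2 * (inner z (A *v z) - \<mu> * inner z z) \<le> 0" if "t > 0" for t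
  proof -
    define y where "y = x0 + t *\<^sub>R z"
    have yy: "inner y y = 1 + t\<^sup>2 * inner z z"
      using x0z x0(2) by (simp add: y_def inner_add_left inner_add_right algebra_simps
          power2_eq_square norm_eq_1)
    then have "inner y y > 0"
      by (simp add: add_pos_nonneg)
    then have "norm y > 0"
      by (metis inner_zero_left less_irrefl zero_less_norm_iff)
    moreover have "y \<in> W"
      unfolding y_def using W(1) x0(1) \<open>z \<in> W\<close> by (intro subspace_add subspace_scale) auto
    ultimately have "inner ((1 / norm y) *\<^sub>R y) (A *v ((1 / norm y) *\<^sub>R y)) \<le> \<mu>"
      unfolding \<mu>_def by (intro max subspace_scale[OF W(1)]) auto
    then have "inner y (A *v y) \<le> \<mu> * inner y y"
      using \<open>norm y > 0\<close>
      by (simp add: matrix_vector_mult_scaleR_right power2_norm_eq_inner[symmetric] field_simps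
          power2_eq_square)
    moreover have "inner y (A *v y) = \<mu> + 2 * t * inner z z + t\<^sup>2 * inner z (A *v z)"
      using Az by (simp add: y_def matrix_vector_right_distrib matrix_vector_mult_scaleR_right
          inner_add_left inner_add_right algebra_simps power2_eq_square \<mu>_def)
    ultimately show ?thesis
      by (simp add: yy algebra_simps)
  qed
  then have "inner z z \<le> 0"
    by (rule real_nonpos_of_quadratic_bound)
  then have "z = 0"
    by (metis inner_eq_zero_iff inner_ge_zero order_antisym)
  then show ?thesis
    by (simp add: z_def \<mu>_def)
qed

lemma hermitian_eigenvector_orthogonal:
  fixes A :: "complex ^ 'd ^ 'd"
  assumes h: "adj A = A" and S: "corthonormal S" "finite S" "card S < CARD('d)"
    and eig: "\<forall>b\<in>S. \<exists>\<mu>::real. A *v b = \<mu> *\<^sub>R b"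
  shows "\<exists>x. cinner x x = 1 \<and> (\<forall>b\<in>S. cinner b x = 0) \<and> (\<exists>\<mu>::real. A *v x = \<mu> *\<^sub>R x)"
proof -
  define W where "W = {x. \<forall>b\<in>S. cinner b x = 0}"
  have W: "subspace W"
    by (auto simp: subspace_def W_def cinner_add_right cinner_scaleR_right)
  have invariant: "A *v x \<in> W" if "x \<in> W" for x
  proof -
    have "cinner b (A *v x) = 0" if "b \<in> S" for b
      using eig that \<open>x \<in> W\<close> by (auto simp: W_def hermitian_cinner[OF h] cinner_scaleR_left)
    then show ?thesis
      by (simp add: W_def)
  qed
  obtain x1 where "x1 \<noteq> 0" "x1 \<in> W"
    using corthonormal_exists_orthogonal[OF S] by (auto simp: W_def)
  then have "(1 / norm x1) *\<^sub>R x1 \<in> W \<inter> sphere 0 1"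
    using subspace_scale[OF W] by auto
  moreover have "compact (W \<inter> sphere 0 1)"
    by (simp add: closed_subspace[OF W] closed_Int_compact)
  moreover have "continuous_on (W \<inter> sphere 0 1) (\<lambda>x. inner x (A *v x))"
    using bounded_linear_matrix_vector_mult_right by (intro continuous_intros linear_continuous_on)
  ultimately obtain x0 where "x0 \<in> W \<inter> sphere 0 1"
    and "\<And>y. y \<in> W \<inter> sphere 0 1 \<Longrightarrow> inner y (A *v y) \<le> inner x0 (A *v x0)"
    using continuous_attains_sup[of "W \<inter> sphere 0 1" "\<lambda>x. inner x (A *v x)"] by blast
  then have "A *v x0 = inner x0 (A *v x0) *\<^sub>R x0" "x0 \<in> W" "norm x0 = 1"
    using hermitian_maximizer_eigenvector[OF h W invariant, of x0] by auto
  then show ?thesis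
    by (intro exI[of _ x0]) (auto simp: W_def cinner_self)
qed

lemma hermitian_eigenbasis:
  fixes A :: "complex ^ 'd ^ 'd"
  assumes "adj A = A"
  shows "\<exists>S. finite S \<and> card S = CARD('d) \<and> corthonormal S \<and> (\<forall>b\<in>S. \<exists>\<mu>::real. A *v b = \<mu> *\<^sub>R b)"
proof -
  have "\<exists>S. finite S \<and> card S = n \<and> corthonormal S \<and> (\<forall>b\<in>S. \<exists>\<mu>::real. A *v b = \<mu> *\<^sub>R b)"
    if "n \<le> CARD('d)" for n
    using that
  proof (induction n)
    case 0
    show ?case
      by (intro exI[of _ "{}"]) (simp add: corthonormal_def)
  next
    case (Suc n)
    then obtain S where S: "finite S" "card S = n" "corthonormal S"
      and eig: "\<forall>b\<in>S. \<exists>\<mu>::real. A *v b = \<mu> *\<^sub>R b"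
      by auto
    then obtain x where "cinner x x = 1" "\<forall>b\<in>S. cinner b x = 0" "\<exists>\<mu>::real. A *v x = \<mu> *\<^sub>R x"
      using hermitian_eigenvector_orthogonal[OF assms S(3,1)] Suc.prems by auto
    then show ?case
      using S eig corthonormal_insert[OF S(3)] by (intro exI[of _ "insert x S"]) auto
  qed
  then show ?thesis
    by blast
qed

section \<open>Positive square roots\<close>

lemma sum_outer_mult_v:
  "(\<Sum>k\<in>I. f k *\<^sub>R outer (v k) (v k)) *v x = (\<Sum>k\<in>I. f k *\<^sub>R (cinner (v k) x *s v k))"
  by (simp add: matrix_vector_mult_sum_left matrix_vector_mult_scaleR_left outer_mult_v)

lemma psd_sum_outer:
  assumes "\<And>k. k \<in> I \<Longrightarrow> f k \<ge> 0"
  shows "psd (\<Sum>k\<in>I. f k *\<^sub>R outer (v k) (v k))"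
proof -
  have "Re (cinner x ((\<Sum>k\<in>I. f k *\<^sub>R outer (v k) (v k)) *v x))
      = (\<Sum>k\<in>I. f k * (cmod (cinner (v k) x))\<^sup>2)" for x
    by (simp add: sum_outer_mult_v cinner_sum_right cinner_scaleR_right cinner_smult_right
        cinner_mult_cinner[of "v _" x, unfolded of_real_power[symmetric]])
  then show ?thesis
    using assms by (simp add: psd_def adj_sum adj_scaleR adj_outer sum_nonneg)
qed

lemma cinner_sum_outer_orthogonal:
  assumes "finite I" "j \<in> I" and orth: "\<And>i k. i \<in> I \<Longrightarrow> k \<in> I \<Longrightarrow> i \<noteq> k \<Longrightarrow> cinner (v i) (v k) = 0"
  shows "cinner (v j) ((\<Sum>k\<in>I. f k *\<^sub>R outer (v k) (v k)) *v x)
       = of_real (f j * (norm (v j))\<^sup>2) * cinner (v j) x"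
proof -
  have "cinner (v j) ((\<Sum>k\<in>I. f k *\<^sub>R outer (v k) (v k)) *v x)
      = (\<Sum>k\<in>I. if k = j then of_real (f j * (norm (v j))\<^sup>2) * cinner (v j) x else 0)"
    using orth assms(2)
    by (auto simp: sum_outer_mult_v cinner_sum_right cinner_scaleR_right cinner_smult_right
        cinner_self intro!: sum.cong)
  then show ?thesis
    using assms(1,2) by simp
qed

lemma sum_outer_mult_orthogonal:
  assumes "finite I" and orth: "\<And>i k. i \<in> I \<Longrightarrow> k \<in> I \<Longrightarrow> i \<noteq> k \<Longrightarrow> cinner (v i) (v k) = 0"
  shows "(\<Sum>k\<in>I. f k *\<^sub>R outer (v k) (v k)) ** (\<Sum>k\<in>I. g k *\<^sub>R outer (v k) (v k))
       = (\<Sum>k\<in>I. (f k * g k * (norm (v k))\<^sup>2) *\<^sub>R outer (v k) (v k))"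
proof (subst matrix_eq, intro allI)
  fix x
  have "(\<Sum>j\<in>I. f j *\<^sub>R (cinner (v j) ((\<Sum>k\<in>I. g k *\<^sub>R outer (v k) (v k)) *v x) *s v j))
      = (\<Sum>j\<in>I. (f j * g j * (norm (v j))\<^sup>2) *\<^sub>R (cinner (v j) x *s v j))"
  proof (rule sum.cong)
    fix j assume "j \<in> I"
    show "f j *\<^sub>R (cinner (v j) ((\<Sum>k\<in>I. g k *\<^sub>R outer (v k) (v k)) *v x) *s v j)
        = (f j * g j * (norm (v j))\<^sup>2) *\<^sub>R (cinner (v j) x *s v j)"
      using cinner_sum_outer_orthogonal[where v = v and f = g and x = x, OF assms(1) \<open>j \<in> I\<close> orth]
      by (simp add: smult_of_real[symmetric] vector_smult_assoc mult_ac)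
  qed simp
  then show "((\<Sum>k\<in>I. f k *\<^sub>R outer (v k) (v k)) ** (\<Sum>k\<in>I. g k *\<^sub>R outer (v k) (v k))) *v x
      = (\<Sum>k\<in>I. (f k * g k * (norm (v k))\<^sup>2) *\<^sub>R outer (v k) (v k)) *v x"
    by (simp add: matrix_vector_mul_assoc[symmetric] sum_outer_mult_v)
qed

lemma mult_sum_outer_cong:
  assumes "\<And>k. k \<in> I \<Longrightarrow> X *v v k = Y *v v k"
  shows "X ** (\<Sum>k\<in>I. f k *\<^sub>R outer (v k) (v k)) = Y ** (\<Sum>k\<in>I. f k *\<^sub>R outer (v k) (v k))"
  using assms
  by (simp add: matrix_eq matrix_vector_mul_assoc[symmetric] sum_outer_mult_v
      matrix_vector_mult_sum_right matrix_vector_mult_scaleR_right matrix_vector_mult_smult)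

lemma hermitian_spectral_decomposition:
  fixes A :: "complex ^ 'd ^ 'd"
  assumes "adj A = A"
  obtains S \<mu> where "finite S" "corthonormal S" "card S = CARD('d)"
    "\<And>b. b \<in> S \<Longrightarrow> A *v b = \<mu> b *\<^sub>R b" "A = (\<Sum>b\<in>S. \<mu> b *\<^sub>R outer b b)"
proof -
  obtain S where S: "finite S" "card S = CARD('d)" "corthonormal S"
    and "\<forall>b\<in>S. \<exists>\<mu>::real. A *v b = \<mu> *\<^sub>R b"
    using hermitian_eigenbasis[OF assms] by blast
  then obtain \<mu> where \<mu>: "\<And>b. b \<in> S \<Longrightarrow> A *v b = \<mu> b *\<^sub>R b"
    by metis
  have "A = (\<Sum>b\<in>S. \<mu> b *\<^sub>R outer b b)"
  proof (rule matrix_eq_on_corthonormal_basis[OF S(3,1,2)])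
    fix b' assume "b' \<in> S"
    have "(\<Sum>b\<in>S. \<mu> b *\<^sub>R outer b b) *v b' = (\<Sum>b\<in>S. if b = b' then \<mu> b' *\<^sub>R b' else 0)"
      unfolding sum_outer_mult_v
    proof (rule sum.cong)
      fix b assume "b \<in> S"
      then show "\<mu> b *\<^sub>R (cinner b b' *s b) = (if b = b' then \<mu> b' *\<^sub>R b' else 0)"
        using S(3) \<open>b' \<in> S\<close> by (simp add: corthonormal_def)
    qed simp
    then show "A *v b' = (\<Sum>b\<in>S. \<mu> b *\<^sub>R outer b b) *v b'"
      using S(1) \<open>b' \<in> S\<close> \<mu> by simp
  qed
  then show ?thesis
    using that S \<mu> by blast
qed

lemma psd_sqrt_exists:
  fixes A :: "complex ^ 'd ^ 'd"
  assumes "psd A"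
  shows "\<exists>R. psd R \<and> R ** R = A"
proof -
  obtain S \<mu> where S: "finite S" "corthonormal S" "card S = CARD('d)"
    and \<mu>: "\<And>b. b \<in> S \<Longrightarrow> A *v b = \<mu> b *\<^sub>R b" and A: "A = (\<Sum>b\<in>S. \<mu> b *\<^sub>R outer b b)"
    by (rule hermitian_spectral_decomposition[OF psd_hermitian[OF assms]]) iprover
  have unit: "norm b = 1" if "b \<in> S" for b
    using S(2) that by (simp add: corthonormal_def norm_eq_1 flip: Re_cinner)
  have \<mu>_nonneg: "\<mu> b \<ge> 0" if "b \<in> S" for b
    using psd_inner[OF assms, of b] \<mu>[OF that] unit[OF that] by (simp add: norm_eq_1)
  define R where "R = (\<Sum>b\<in>S. sqrt (\<mu> b) *\<^sub>R outer b b)"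
  have "psd R"
    unfolding R_def using \<mu>_nonneg by (intro psd_sum_outer) simp
  have "R ** R = (\<Sum>b\<in>S. (sqrt (\<mu> b) * sqrt (\<mu> b) * (norm b)\<^sup>2) *\<^sub>R outer b b)"
    unfolding R_def using S(2)
    by (intro sum_outer_mult_orthogonal[where v = id, simplified, OF S(1)]) (simp add: corthonormal_def)
  also have "\<dots> = A"
    unfolding A using unit \<mu>_nonneg by (intro sum.cong) simp_all
  finally show ?thesis
    using \<open>psd R\<close> by blast
qed

lemma psd_add_scaleR_eq_0:
  assumes "psd A" "c > 0" "A *v y + c *\<^sub>R y = 0"
  shows "y = 0"
proof -
  have "inner y (A *v y) = - c * inner y y"
    using assms(3) by (metis add_eq_0_iff2 inner_minus_right inner_scaleR_right mult_minus_left)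
  then have "c * inner y y \<le> 0"
    using psd_inner[OF assms(1), of y] by simp
  then have "inner y y \<le> 0"
    using assms(2) by (simp add: mult_le_0_iff)
  then show ?thesis
    by (metis inner_eq_zero_iff inner_ge_zero order_antisym)
qed

lemma psd_sqrt_unique:
  fixes S1 S2 :: "complex ^ 'd ^ 'd"
  assumes p1: "psd S1" and p2: "psd S2" and eq: "S1 ** S1 = S2 ** S2"
  shows "S1 = S2"
proof -
  obtain B where B: "finite B" "card B = CARD('d)" "corthonormal B"
    and eig: "\<forall>b\<in>B. \<exists>\<sigma>::real. S1 *v b = \<sigma> *\<^sub>R b"
    using hermitian_eigenbasis[OF psd_hermitian[OF p1]] by blast
  show ?thesis
  proof (rule matrix_eq_on_corthonormal_basis[OF B(3,1,2)])
    fix b assume "b \<in> B"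
    then obtain \<sigma> where \<sigma>: "S1 *v b = \<sigma> *\<^sub>R b"
      using eig by blast
    have "\<sigma> \<ge> 0"
      using psd_inner[OF p1, of b] B(3) \<open>b \<in> B\<close>
      by (simp add: \<sigma> corthonormal_def cinner_scaleR_right flip: Re_cinner)
    have SS: "S2 *v (S2 *v b) = (\<sigma> * \<sigma>) *\<^sub>R b"
      by (metis eq matrix_vector_mul_assoc matrix_vector_mult_scaleR_right \<sigma> scaleR_scaleR)
    show "S1 *v b = S2 *v b"
    proof (cases "\<sigma> = 0")
      case True
      then have "inner (S2 *v b) (S2 *v b) = 0"
        using SS hermitian_inner[OF psd_hermitian[OF p2], of b "S2 *v b"] by simp
      then show ?thesis
        using \<sigma> True by simp
    next
      case False
      \<comment> \<open>S2 b - \<sigma> b lies in the -\<sigma>-eigenspace of S2, which is trivial for \<sigma> > 0.\<close>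
      have "S2 *v (S2 *v b - \<sigma> *\<^sub>R b) + \<sigma> *\<^sub>R (S2 *v b - \<sigma> *\<^sub>R b) = 0"
        by (simp add: SS matrix_vector_mult_diff_distrib matrix_vector_mult_scaleR_right algebra_simps)
      moreover have "\<sigma> > 0"
        using False \<open>\<sigma> \<ge> 0\<close> by simp
      ultimately have "S2 *v b - \<sigma> *\<^sub>R b = 0"
        using psd_add_scaleR_eq_0[OF p2] by blast
      then show ?thesis
        using \<sigma> by simp
    qed
  qed
qed

lemma msqrt_unique: "psd R \<Longrightarrow> R ** R = A \<Longrightarrow> msqrt A = R"
  unfolding msqrt_def by (rule the_equality) (auto intro: psd_sqrt_unique)

lemma msqrt_psd: "psd A \<Longrightarrow> psd (msqrt A)"
  using psd_sqrt_exists msqrt_unique by metis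

lemma msqrt_square: "psd A \<Longrightarrow> msqrt A ** msqrt A = A"
  using psd_sqrt_exists msqrt_unique by metis

lemma msqrt_mv_eq_0:
  assumes "psd A" "inner x (A *v x) = 0"
  shows "msqrt A *v x = 0"
proof -
  have "inner (msqrt A *v x) (msqrt A *v x) = inner x (A *v x)"
    using hermitian_inner[OF psd_hermitian[OF msqrt_psd[OF assms(1)]], of x "msqrt A *v x"]
    by (simp add: matrix_vector_mul_assoc msqrt_square[OF assms(1)])
  then show ?thesis
    using assms(2) by simp
qed

lemma psd_mv_eq_0: "psd A \<Longrightarrow> inner x (A *v x) = 0 \<Longrightarrow> A *v x = 0"
  by (metis matrix_vector_mul_assoc matrix_vector_mult_0_right msqrt_mv_eq_0 msqrt_square)

section \<open>Partial derivatives\<close>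

lemma has_vector_derivative_pd:
  assumes "f differentiable (at \<theta>)"
  shows "((\<lambda>s. f (\<theta> + s *\<^sub>R axis l 1)) has_vector_derivative pd f l \<theta>) (at 0)"
proof -
  have "(f \<circ> (\<lambda>s::real. \<theta> + s *\<^sub>R axis l 1)) differentiable (at 0)"
    by (rule differentiable_chain_at) (auto intro!: derivative_intros simp: assms)
  then show ?thesis
    by (simp add: pd_def o_def vector_derivative_works)
qed

lemma pd_eqI: "((\<lambda>s. f (\<theta> + s *\<^sub>R axis l 1)) has_vector_derivative D) (at 0) \<Longrightarrow> pd f l \<theta> = D"
  unfolding pd_def by (rule vector_derivative_at)

lemma pd_const [simp]: "pd (\<lambda>t. c) l \<theta> = 0"
  by (rule pd_eqI) simp

lemma pd_bounded_linear:
  assumes "bounded_linear L" "f differentiable (at \<theta>)"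
  shows "pd (\<lambda>t. L (f t)) l \<theta> = L (pd f l \<theta>)"
  by (intro pd_eqI bounded_linear.has_vector_derivative[OF assms(1)] has_vector_derivative_pd assms(2))

lemma pd_bounded_bilinear:
  assumes "bounded_bilinear B" "f differentiable (at \<theta>)" "g differentiable (at \<theta>)"
  shows "pd (\<lambda>t. B (f t) (g t)) l \<theta> = B (f \<theta>) (pd g l \<theta>) + B (pd f l \<theta>) (g \<theta>)"
  using bounded_bilinear.has_vector_derivative[OF assms(1)
      has_vector_derivative_pd[OF assms(2)] has_vector_derivative_pd[OF assms(3)], of l l]
  by (intro pd_eqI) simp

lemma pd_sum:
  assumes "finite I" "\<And>i. i \<in> I \<Longrightarrow> f i differentiable (at \<theta>)"
  shows "pd (\<lambda>t. \<Sum>i\<in>I. f i t) l \<theta> = (\<Sum>i\<in>I. pd (f i) l \<theta>)"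
  using assms by (intro pd_eqI has_vector_derivative_sum has_vector_derivative_pd) auto

lemma bounded_linear_differentiable:
  assumes "bounded_linear L" "f differentiable (at \<theta>)"
  shows "(\<lambda>t. L (f t)) differentiable (at \<theta>)"
  using differentiable_compose[OF bounded_linear_imp_differentiable[OF assms(1)] assms(2)] .

lemma bounded_bilinear_differentiable:
  assumes "bounded_bilinear B" "f differentiable (at \<theta>)" "g differentiable (at \<theta>)"
  shows "(\<lambda>t. B (f t) (g t)) differentiable (at \<theta>)"
proof -
  obtain f' g' where "(f has_derivative f') (at \<theta>)" "(g has_derivative g') (at \<theta>)"
    using assms(2,3) unfolding differentiable_def by blast
  from bounded_bilinear.FDERIV[OF assms(1) this] show ?thesis
    unfolding differentiable_def by blast
qed

lemma Re_cinner_pd_unit: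
  assumes "\<And>t. cinner (g t) (g t) = 1" "g differentiable (at \<theta>)"
  shows "Re (cinner (pd g l \<theta>) (g \<theta>)) = 0"
proof -
  have "0 = pd (\<lambda>t. cinner (g t) (g t)) l \<theta>"
    using assms(1) by simp
  also have "\<dots> = cinner (g \<theta>) (pd g l \<theta>) + cinner (pd g l \<theta>) (g \<theta>)"
    by (rule pd_bounded_bilinear[OF bounded_bilinear_cinner assms(2) assms(2)])
  also have "\<dots> = cnj (cinner (pd g l \<theta>) (g \<theta>)) + cinner (pd g l \<theta>) (g \<theta>)"
    by (simp add: cnj_cinner)
  finally show ?thesis
    by (simp add: complex_eq_iff)
qed

lemma pd_scaleR_unit:
  assumes unit: "\<And>t. cinner (g t) (g t) = 1" and v: "\<And>t. v t = r t *\<^sub>R g t"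
    and "v differentiable (at \<theta>)" "g differentiable (at \<theta>)"
  shows "\<exists>c. pd v l \<theta> = r \<theta> *\<^sub>R pd g l \<theta> + c *\<^sub>R g \<theta>"
proof -
  have "r t = inner (g t) (v t)" for t
    using unit[of t] by (simp add: v Re_cinner[symmetric] cinner_scaleR_right)
  then have "v = (\<lambda>t. inner (g t) (v t) *\<^sub>R g t)"
    using v by auto
  then have "pd v l \<theta> = pd (\<lambda>t. inner (g t) (v t) *\<^sub>R g t) l \<theta>"
    by simp
  also have "\<dots> = r \<theta> *\<^sub>R pd g l \<theta> + pd (\<lambda>t. inner (g t) (v t)) l \<theta> *\<^sub>R g \<theta>"
    using assms(3,4) \<open>r \<theta> = inner (g \<theta>) (v \<theta>)\<close>
    by (simp add: pd_bounded_bilinear[OF bounded_bilinear_scaleR])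
  finally show ?thesis
    by blast
qed

section \<open>Saturating the Fisher bound\<close>

lemma povm_sum_mv: "povm M \<Longrightarrow> (\<Sum>m\<in>UNIV. M m *v x) = x"
  by (simp add: povm_def matrix_vector_mult_sum_left[symmetric])

lemma outprob_sum_outer: "outprob (\<Sum>k\<in>I. outer (v k) (v k)) A = (\<Sum>k\<in>I. inner (v k) (A *v v k))"
  by (simp add: outprob_def matrix_mult_sum_left mtrace_sum mtrace_outer_mult Re_cinner)

lemma sum_quadratic_form_residual:
  fixes A :: "complex ^ 'd ^ 'd" and v d :: "'k \<Rightarrow> complex ^ 'd" and I :: "'k set"
  assumes "adj A = A"
  defines "a \<equiv> \<Sum>k\<in>I. inner (v k) (A *v d k)"
    and "P \<equiv> \<Sum>k\<in>I. inner (v k) (A *v v k)"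
    and "Q \<equiv> \<Sum>k\<in>I. inner (d k) (A *v d k)"
  shows "(\<Sum>k\<in>I. inner (d k - (a / P) *\<^sub>R v k) (A *v (d k - (a / P) *\<^sub>R v k))) = Q - a\<^sup>2 / P"
proof -
  have "inner (d k - t *\<^sub>R v k) (A *v (d k - t *\<^sub>R v k))
      = inner (d k) (A *v d k) - 2 * t * inner (v k) (A *v d k) + t\<^sup>2 * inner (v k) (A *v v k)" for k t
    using hermitian_inner[OF assms(1), of "d k" "v k"]
    by (simp add: matrix_vector_mult_diff_distrib matrix_vector_mult_scaleR_right inner_diff_left
        inner_diff_right inner_commute algebra_simps power2_eq_square)
  then have "(\<Sum>k\<in>I. inner (d k - t *\<^sub>R v k) (A *v (d k - t *\<^sub>R v k))) = Q - 2 * t * a + t\<^sup>2 * P" for t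
    by (simp add: a_def P_def Q_def sum_subtractf sum.distrib sum_distrib_left)
  note this[of "a / P"]
  also have "Q - 2 * (a / P) * a + (a / P)\<^sup>2 * P = Q - a\<^sup>2 / P"
    by (cases "P = 0") (simp_all add: power2_eq_square field_simps)
  finally show ?thesis .
qed

text \<open>Outcome by outcome, Cauchy-Schwarz in the semi-inner product of M m bounds a_m^2 / P_m by
  \<Sum>_k \<langle>d_k, M_m d_k\<rangle>, and these bounds add up to \<Sum>_k |d_k|^2; so equality of the totals
  forces equality in every Cauchy-Schwarz inequality.\<close>
lemma povm_fisher_saturation:
  fixes M :: "'o::finite \<Rightarrow> complex ^ 'd ^ 'd" and v d :: "'k::finite \<Rightarrow> complex ^ 'd"
  assumes M: "povm M"
  defines "a \<equiv> \<lambda>m. \<Sum>k\<in>UNIV. inner (v k) (M m *v d k)"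
    and "P \<equiv> \<lambda>m. \<Sum>k\<in>UNIV. inner (v k) (M m *v v k)"
  assumes eq: "(\<Sum>m\<in>UNIV. (a m)\<^sup>2 / P m) = (\<Sum>k\<in>UNIV. inner (d k) (d k))"
  shows "inner (d k - (a m / P m) *\<^sub>R v k) (M m *v (d k - (a m / P m) *\<^sub>R v k)) = 0"
proof -
  have psd: "psd (M m)" for m
    using M by (simp add: povm_def)
  define Q where "Q m = (\<Sum>k\<in>UNIV. inner (d k) (M m *v d k))" for m
  define R where "R m = (\<Sum>k\<in>UNIV. inner (d k - (a m / P m) *\<^sub>R v k) (M m *v (d k - (a m / P m) *\<^sub>R v k)))" for m
  have R: "R m = Q m - (a m)\<^sup>2 / P m" for m
    unfolding R_def Q_def a_def P_def by (rule sum_quadratic_form_residual[OF psd_hermitian[OF psd]])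
  have "(\<Sum>m\<in>UNIV. Q m) = (\<Sum>k\<in>UNIV. inner (d k) (\<Sum>m\<in>UNIV. M m *v d k))"
    unfolding Q_def inner_sum_right by (rule sum.swap)
  then have "(\<Sum>m\<in>UNIV. R m) = 0"
    using eq by (simp add: R sum_subtractf povm_sum_mv[OF M])
  moreover have R_nonneg: "R m \<ge> 0" for m
    unfolding R_def by (intro sum_nonneg psd_inner psd)
  ultimately have "R m = 0"
    by (simp add: sum_nonneg_eq_0_iff)
  then show ?thesis
    unfolding R_def by (simp add: sum_nonneg_eq_0_iff psd_inner psd)
qed

lemma cinner_povm_hermitian:
  assumes M: "povm M" and d: "\<And>m k. M m *v d k = c m *\<^sub>R (M m *v v k)"
  shows "cinner (d j) (v k) = cinner (v j) (d k)"
proof -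
  have expand: "d k = (\<Sum>m\<in>UNIV. c m *\<^sub>R (M m *v v k))" for k
    using povm_sum_mv[OF M, of "d k"] by (simp add: d)
  have "cinner (d j) (v k) = (\<Sum>m\<in>UNIV. of_real (c m) * cinner (M m *v v j) (v k))"
    by (simp add: expand[of j] cinner_sum_left cinner_scaleR_left)
  also have "\<dots> = (\<Sum>m\<in>UNIV. of_real (c m) * cinner (v j) (M m *v v k))"
    using M by (simp add: povm_def psd_def hermitian_cinner)
  also have "\<dots> = cinner (v j) (d k)"
    by (simp add: expand[of k] cinner_sum_right cinner_scaleR_right)
  finally show ?thesis .
qed

text \<open>Evaluating the SLD equation on v_q shows that y = \<Lambda> v_q - 2 d_q satisfies
  \<rho> y = - p_q y, which is impossible for y \<noteq> 0 since \<rho> \<ge> 0.\<close>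
lemma sld_mv_eq_derivative:
  fixes v d :: "'k::finite \<Rightarrow> complex ^ 'd"
  defines "\<rho> \<equiv> \<Sum>k\<in>UNIV. outer (v k) (v k)"
  assumes orth: "\<And>j k. cinner (v j) (v k) = (if j = k then of_real (p k) else 0)"
    and cross: "\<And>j k. j \<noteq> k \<Longrightarrow> cinner (d j) (v k) = 0"
    and herm: "\<And>j k. cinner (d j) (v k) = cinner (v j) (d k)"
    and sld: "(\<Sum>k\<in>UNIV. outer (v k) (d k) + outer (d k) (v k)) = (1/2) *\<^sub>R (\<rho> ** \<Lambda> + \<Lambda> ** \<rho>)"
    and "p q > 0"
  shows "\<Lambda> *v v q = 2 *\<^sub>R d q"
proof -
  have \<rho>_mv: "\<rho> *v x = (\<Sum>k\<in>UNIV. cinner (v k) x *s v k)" for x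
    by (simp add: \<rho>_def matrix_vector_mult_sum_left outer_mult_v)
  have vv: "cinner (v k) (v q) *s v k = (if k = q then p q *\<^sub>R v q else 0)" for k
    using orth[of k q] by (simp add: smult_of_real)
  have vd: "cinner (v k) (d q) *s v k = (if k = q then cinner (v q) (d q) *s v q else 0)" for k
    using cross[of k q] herm[of k q] by simp
  have \<rho>_v: "\<rho> *v v q = p q *\<^sub>R v q"
    unfolding \<rho>_mv sum.cong[OF refl vv] by simp
  have \<rho>_d: "\<rho> *v d q = cinner (v q) (d q) *s v q"
    unfolding \<rho>_mv sum.cong[OF refl vd] by simp
  have "(outer (v k) (d k) + outer (d k) (v k)) *v v q
      = (if k = q then cinner (d q) (v q) *s v q + p q *\<^sub>R d q else 0)" for k
    using orth[of k q] cross[of k q] by (simp add: matrix_vector_mult_add_rdistrib outer_mult_v smult_of_real)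
  then have "(\<Sum>k\<in>UNIV. outer (v k) (d k) + outer (d k) (v k)) *v v q
      = cinner (d q) (v q) *s v q + p q *\<^sub>R d q"
    by (simp add: matrix_vector_mult_sum_left)
  moreover have "(\<Sum>k\<in>UNIV. outer (v k) (d k) + outer (d k) (v k)) *v v q
      = (1/2) *\<^sub>R (\<rho> *v (\<Lambda> *v v q) + p q *\<^sub>R (\<Lambda> *v v q))"
    unfolding sld matrix_vector_mult_scaleR_left matrix_vector_mult_add_rdistrib
      matrix_vector_mul_assoc[symmetric] \<rho>_v matrix_vector_mult_scaleR_right ..
  ultimately have "(1/2) *\<^sub>R (\<rho> *v (\<Lambda> *v v q) + p q *\<^sub>R (\<Lambda> *v v q)) = \<rho> *v d q + p q *\<^sub>R d q"
    by (simp add: \<rho>_d herm[of q q])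
  then have "\<rho> *v (\<Lambda> *v v q) + p q *\<^sub>R (\<Lambda> *v v q) = 2 *\<^sub>R (\<rho> *v d q + p q *\<^sub>R d q)"
    by (metis (no_types) scaleR_scaleR divide_self_if mult.commute times_divide_eq_left
        scaleR_one zero_neq_numeral)
  then have "\<rho> *v (\<Lambda> *v v q - 2 *\<^sub>R d q) + p q *\<^sub>R (\<Lambda> *v v q - 2 *\<^sub>R d q) = 0"
    by (simp add: matrix_vector_mult_diff_distrib matrix_vector_mult_scaleR_right algebra_simps)
  moreover have "psd \<rho>"
    using psd_sum_outer[of UNIV "\<lambda>_. 1" v] by (simp add: \<rho>_def)
  ultimately have "\<Lambda> *v v q - 2 *\<^sub>R d q = 0"
    using psd_add_scaleR_eq_0 \<open>p q > 0\<close> by blast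
  then show ?thesis
    by simp
qed

section \<open>Canonical Kraus representations\<close>

text \<open>The Kraus vectors kraus_vec k t = \<Upsilon>_k(t) \<psi>0 = \<surd>p_k w_k are the unnormalised branches of the
  output state rho.\<close>
locale canonical_kraus_family =
  fixes U :: "'d::finite \<Rightarrow> real ^ 'p::finite \<Rightarrow> complex ^ 'd ^ 'd"
    and \<psi>0 :: "complex ^ 'd"
    and p :: "'d \<Rightarrow> real ^ 'p \<Rightarrow> real"
    and w :: "'d \<Rightarrow> real ^ 'p \<Rightarrow> complex ^ 'd"
  assumes U_diff: "\<And>k t. U k differentiable (at t)"
    and U_canon: "\<And>t j k. mtrace (U k t ** outer \<psi>0 \<psi>0 ** adj (U j t))
                     = (if j = k then complex_of_real (p k t) else 0)"
    and w_diff: "\<And>k t. w k differentiable (at t)"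
    and w_onb: "\<And>t j k. cinner (w j t) (w k t) = (if j = k then 1 else 0)"
    and w_def: "\<And>t k. p k t > 0 \<Longrightarrow> w k t = (1 / sqrt (p k t)) *\<^sub>R (U k t *v \<psi>0)"
begin

definition kraus_vec :: "'d \<Rightarrow> real ^ 'p \<Rightarrow> complex ^ 'd" where
  "kraus_vec k t = U k t *v \<psi>0"

definition rho :: "real ^ 'p \<Rightarrow> complex ^ 'd ^ 'd" where
  "rho t = channel (\<lambda>k. U k t) (outer \<psi>0 \<psi>0)"

lemma kraus_vec_differentiable: "kraus_vec k differentiable (at t)"
proof -
  have "kraus_vec k = (\<lambda>t. U k t *v \<psi>0)"
    by (simp add: fun_eq_iff kraus_vec_def)
  then show ?thesis
    using bounded_linear_differentiable[OF bounded_linear_matrix_vector_mult_left U_diff] by simp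
qed

lemma pd_kraus_vec: "pd (kraus_vec k) l \<theta> = pd (U k) l \<theta> *v \<psi>0"
proof -
  have "kraus_vec k = (\<lambda>t. U k t *v \<psi>0)"
    by (simp add: fun_eq_iff kraus_vec_def)
  then show ?thesis
    using pd_bounded_linear[OF bounded_linear_matrix_vector_mult_left U_diff] by simp
qed

lemma cinner_kraus_vec: "cinner (kraus_vec j t) (kraus_vec k t) = (if j = k then of_real (p k t) else 0)"
  using U_canon[of k t j] by (simp add: kraus_vec_def sandwich_outer mtrace_outer)

lemma p_eq_norm: "p k t = (norm (kraus_vec k t))\<^sup>2"
  using cinner_kraus_vec[of k t k] by (simp add: cinner_self flip: of_real_power)

lemma kraus_vec_eq_scaleR_w: "kraus_vec k t = sqrt (p k t) *\<^sub>R w k t"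
proof (cases "p k t > 0")
  case True
  then show ?thesis
    by (simp add: w_def kraus_vec_def)
next
  case False
  then show ?thesis
    using p_eq_norm[of k t] by simp
qed

lemma rho_eq_sum_outer: "rho t = (\<Sum>k\<in>UNIV. outer (kraus_vec k t) (kraus_vec k t))"
  by (simp add: rho_def channel_def sandwich_outer kraus_vec_def)

lemma pd_rho:
  "pd rho l \<theta> = (\<Sum>k\<in>UNIV. outer (kraus_vec k \<theta>) (pd (kraus_vec k) l \<theta>) + outer (pd (kraus_vec k) l \<theta>) (kraus_vec k \<theta>))"
proof -
  have "rho = (\<lambda>t. \<Sum>k\<in>UNIV. outer (kraus_vec k t) (kraus_vec k t))"
    by (simp add: fun_eq_iff rho_eq_sum_outer)
  then show ?thesis
    by (simp add: pd_sum pd_bounded_bilinear[OF bounded_bilinear_outer] kraus_vec_differentiable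
        bounded_bilinear_differentiable[OF bounded_bilinear_outer])
qed

lemma pd_outprob_rho:
  assumes "adj A = A"
  shows "pd (\<lambda>t. outprob (rho t) A) l \<theta> = 2 * (\<Sum>k\<in>UNIV. inner (kraus_vec k \<theta>) (A *v pd (kraus_vec k) l \<theta>))"
proof -
  have "(\<lambda>t. outprob (rho t) A) = (\<lambda>t. \<Sum>k\<in>UNIV. inner (kraus_vec k t) (A *v kraus_vec k t))"
    by (simp add: fun_eq_iff rho_eq_sum_outer outprob_sum_outer)
  moreover have "inner (pd (kraus_vec k) l \<theta>) (A *v kraus_vec k \<theta>) = inner (kraus_vec k \<theta>) (A *v pd (kraus_vec k) l \<theta>)" for k
    using hermitian_inner[OF assms] by (simp add: inner_commute)
  ultimately show ?thesis
    using kraus_vec_differentiable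
    by (simp add: pd_sum pd_bounded_bilinear[OF bounded_bilinear_inner] sum.distrib sum_distrib_left
        pd_bounded_linear[OF bounded_linear_matrix_vector_mult_right]
        bounded_linear_differentiable[OF bounded_linear_matrix_vector_mult_right])
qed

lemma CUps_diag: "CUps U (outer \<psi>0 \<psi>0) \<theta> l l = 4 * (\<Sum>k\<in>UNIV. inner (pd (kraus_vec k) l \<theta>) (pd (kraus_vec k) l \<theta>))"
  by (simp add: CUps_def pd_kraus_vec sandwich_outer mtrace_outer Re_cinner)

lemma cinner_pd_kraus_vec_skew:
  assumes "j \<noteq> k"
  shows "cinner (kraus_vec j \<theta>) (pd (kraus_vec k) l \<theta>) + cinner (pd (kraus_vec j) l \<theta>) (kraus_vec k \<theta>) = 0"
proof -
  have "(\<lambda>t. cinner (kraus_vec j t) (kraus_vec k t)) = (\<lambda>t. 0)"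
    using assms by (simp add: cinner_kraus_vec)
  then have "pd (\<lambda>t. cinner (kraus_vec j t) (kraus_vec k t)) l \<theta> = 0"
    by simp
  then show ?thesis
    by (simp add: pd_bounded_bilinear[OF bounded_bilinear_cinner kraus_vec_differentiable kraus_vec_differentiable])
qed

lemma msqrt_rho: "msqrt (rho \<theta>) = (\<Sum>k\<in>UNIV. (1 / sqrt (p k \<theta>)) *\<^sub>R outer (kraus_vec k \<theta>) (kraus_vec k \<theta>))"
proof (rule msqrt_unique)
  have orth: "cinner (kraus_vec j \<theta>) (kraus_vec k \<theta>) = 0" if "j \<noteq> k" for j k
    using that by (simp add: cinner_kraus_vec)
  show "psd (\<Sum>k\<in>UNIV. (1 / sqrt (p k \<theta>)) *\<^sub>R outer (kraus_vec k \<theta>) (kraus_vec k \<theta>))"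
    using p_eq_norm by (intro psd_sum_outer) simp
  have "(1 / sqrt (p k \<theta>) * (1 / sqrt (p k \<theta>)) * (norm (kraus_vec k \<theta>))\<^sup>2) *\<^sub>R outer (kraus_vec k \<theta>) (kraus_vec k \<theta>)
      = outer (kraus_vec k \<theta>) (kraus_vec k \<theta>)" for k
    using p_eq_norm[of k \<theta>] by (cases "p k \<theta> = 0") (simp_all add: outer_def vec_eq_iff power2_eq_square)
  then show "(\<Sum>k\<in>UNIV. (1 / sqrt (p k \<theta>)) *\<^sub>R outer (kraus_vec k \<theta>) (kraus_vec k \<theta>))
      ** (\<Sum>k\<in>UNIV. (1 / sqrt (p k \<theta>)) *\<^sub>R outer (kraus_vec k \<theta>) (kraus_vec k \<theta>)) = rho \<theta>"
    by (simp add: sum_outer_mult_orthogonal orth rho_eq_sum_outer)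
qed

end

locale fisher_saturating = canonical_kraus_family U \<psi>0 p w
  for U :: "'d::finite \<Rightarrow> real ^ 'p::finite \<Rightarrow> complex ^ 'd ^ 'd" and \<psi>0 p w +
  fixes M :: "'o::finite \<Rightarrow> complex ^ 'd ^ 'd" and \<theta> :: "real ^ 'p"
  assumes M_povm: "povm M"
    and fisher_eq_CUps: "\<And>l. fisher rho M \<theta> l l = CUps U (outer \<psi>0 \<psi>0) \<theta> l l"
begin

definition coeff :: "'p \<Rightarrow> 'o \<Rightarrow> real" where
  "coeff l m = (\<Sum>k\<in>UNIV. inner (kraus_vec k \<theta>) (M m *v pd (kraus_vec k) l \<theta>))
             / (\<Sum>k\<in>UNIV. inner (kraus_vec k \<theta>) (M m *v kraus_vec k \<theta>))"

lemma psd_M: "psd (M m)"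
  using M_povm by (simp add: povm_def)

lemma pd_kraus_vec_residual_null:
  "inner (pd (kraus_vec k) l \<theta> - coeff l m *\<^sub>R kraus_vec k \<theta>) (M m *v (pd (kraus_vec k) l \<theta> - coeff l m *\<^sub>R kraus_vec k \<theta>)) = 0"
proof -
  define a where "a m = (\<Sum>k\<in>UNIV. inner (kraus_vec k \<theta>) (M m *v pd (kraus_vec k) l \<theta>))" for m
  define P where "P m = (\<Sum>k\<in>UNIV. inner (kraus_vec k \<theta>) (M m *v kraus_vec k \<theta>))" for m
  have "fisher rho M \<theta> l l = (\<Sum>m\<in>UNIV. (2 * a m) * (2 * a m) / P m)"
    unfolding fisher_def pd_outprob_rho[OF psd_hermitian[OF psd_M]]
    by (simp add: rho_eq_sum_outer outprob_sum_outer a_def P_def)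
  also have "\<dots> = 4 * (\<Sum>m\<in>UNIV. (a m)\<^sup>2 / P m)"
    by (simp add: sum_distrib_left power2_eq_square)
  finally have "(\<Sum>m\<in>UNIV. (a m)\<^sup>2 / P m) = (\<Sum>k\<in>UNIV. inner (pd (kraus_vec k) l \<theta>) (pd (kraus_vec k) l \<theta>))"
    using fisher_eq_CUps[of l] by (simp add: CUps_diag)
  then show ?thesis
    using povm_fisher_saturation[OF M_povm, of "\<lambda>k. kraus_vec k \<theta>" "\<lambda>k. pd (kraus_vec k) l \<theta>"]
    by (simp add: a_def P_def coeff_def)
qed

lemma M_pd_kraus_vec: "M m *v pd (kraus_vec k) l \<theta> = coeff l m *\<^sub>R (M m *v kraus_vec k \<theta>)"
  using psd_mv_eq_0[OF psd_M pd_kraus_vec_residual_null]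
  by (simp add: matrix_vector_mult_diff_distrib matrix_vector_mult_scaleR_right)

lemma msqrt_M_pd_kraus_vec: "msqrt (M m) *v pd (kraus_vec k) l \<theta> = coeff l m *\<^sub>R (msqrt (M m) *v kraus_vec k \<theta>)"
  using msqrt_mv_eq_0[OF psd_M pd_kraus_vec_residual_null]
  by (simp add: matrix_vector_mult_diff_distrib matrix_vector_mult_scaleR_right)

lemma cinner_pd_kraus_vec_hermitian:
  "cinner (pd (kraus_vec j) l \<theta>) (kraus_vec k \<theta>) = cinner (kraus_vec j \<theta>) (pd (kraus_vec k) l \<theta>)"
  by (rule cinner_povm_hermitian[OF M_povm M_pd_kraus_vec])

lemma cinner_pd_kraus_vec_offdiag: "j \<noteq> k \<Longrightarrow> cinner (pd (kraus_vec j) l \<theta>) (kraus_vec k \<theta>) = 0"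
  using cinner_pd_kraus_vec_skew[of j k \<theta> l] cinner_pd_kraus_vec_hermitian[of j l k] by simp

lemma cinner_pd_w_eq_0:
  assumes "p j \<theta> > 0" "p k \<theta> > 0"
  shows "cinner (pd (w j) l \<theta>) (w k \<theta>) = 0"
proof -
  define z where "z = cinner (pd (w j) l \<theta>) (w k \<theta>)"
  have unit: "cinner (w j t) (w j t) = 1" for t
    by (simp add: w_onb)
  obtain c where c: "pd (kraus_vec j) l \<theta> = sqrt (p j \<theta>) *\<^sub>R pd (w j) l \<theta> + c *\<^sub>R w j \<theta>"
    using pd_scaleR_unit[OF unit kraus_vec_eq_scaleR_w kraus_vec_differentiable w_diff] by blast
  have "cinner (pd (kraus_vec j) l \<theta>) (kraus_vec k \<theta>)
      = of_real (sqrt (p k \<theta>)) * (of_real (sqrt (p j \<theta>)) * z + (if j = k then of_real c else 0))"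
    by (simp add: c kraus_vec_eq_scaleR_w[of k \<theta>] cinner_add_left cinner_scaleR_left cinner_scaleR_right
        w_onb z_def algebra_simps)
  moreover have "cinner (pd (kraus_vec j) l \<theta>) (kraus_vec k \<theta>) = 0" if "j \<noteq> k"
    using cinner_pd_kraus_vec_offdiag[OF that] .
  moreover have "Im (cinner (pd (kraus_vec j) l \<theta>) (kraus_vec j \<theta>)) = 0"
    using cinner_pd_kraus_vec_hermitian[of j l j] cnj_cinner[of "pd (kraus_vec j) l \<theta>" "kraus_vec j \<theta>"]
    by (metis Reals_cnj_iff complex_is_Real_iff)
  moreover have "Re z = 0" if "j = k"
    using Re_cinner_pd_unit[OF unit w_diff] that by (simp add: z_def)
  ultimately show ?thesis
    using assms by (cases "j = k") (simp_all add: z_def complex_eq_iff)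
qed

lemma sld_mv_kraus_vec:
  assumes sld: "pd rho l \<theta> = (1/2) *\<^sub>R (rho \<theta> ** \<Lambda> + \<Lambda> ** rho \<theta>)" and "p q \<theta> > 0"
  shows "\<Lambda> *v kraus_vec q \<theta> = 2 *\<^sub>R pd (kraus_vec q) l \<theta>"
  using sld_mv_eq_derivative[of "\<lambda>k. kraus_vec k \<theta>" "\<lambda>k. p k \<theta>" "\<lambda>k. pd (kraus_vec k) l \<theta>" \<Lambda>]
    cinner_kraus_vec cinner_pd_kraus_vec_offdiag cinner_pd_kraus_vec_hermitian assms
  by (simp add: pd_rho rho_eq_sum_outer)

lemma msqrt_M_sld_msqrt_rho:
  assumes sld: "pd rho l \<theta> = (1/2) *\<^sub>R (rho \<theta> ** \<Lambda> + \<Lambda> ** rho \<theta>)"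
  shows "msqrt (M m) ** \<Lambda> ** msqrt (rho \<theta>) = (2 * coeff l m) *\<^sub>R (msqrt (M m) ** msqrt (rho \<theta>))"
proof -
  have on_kraus_vec: "(msqrt (M m) ** \<Lambda>) *v kraus_vec k \<theta> = ((2 * coeff l m) *\<^sub>R msqrt (M m)) *v kraus_vec k \<theta>" for k
  proof (cases "p k \<theta> > 0")
    case True
    then show ?thesis
      by (simp add: matrix_vector_mul_assoc[symmetric] sld_mv_kraus_vec[OF sld] msqrt_M_pd_kraus_vec
          matrix_vector_mult_scaleR_right matrix_vector_mult_scaleR_left)
  next
    case False
    then show ?thesis
      using p_eq_norm[of k \<theta>] by simp
  qed
  have "msqrt (M m) ** \<Lambda> ** msqrt (rho \<theta>) = ((2 * coeff l m) *\<^sub>R msqrt (M m)) ** msqrt (rho \<theta>)"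
    unfolding msqrt_rho by (rule mult_sum_outer_cong) (rule on_kraus_vec)
  then show ?thesis
    by (simp add: matrix_mult_scaleR_left)
qed

end

theorem lemma11:
  fixes E :: "'k::finite \<Rightarrow> real ^ 'p::finite \<Rightarrow> complex ^ 'd::finite ^ 'd"
    and \<psi>0 :: "complex ^ 'd"
    and U :: "'d \<Rightarrow> real ^ 'p \<Rightarrow> complex ^ 'd ^ 'd"
    and p :: "'d \<Rightarrow> real ^ 'p \<Rightarrow> real"
    and w :: "'d \<Rightarrow> real ^ 'p \<Rightarrow> complex ^ 'd"
    and \<Lambda> :: "'p \<Rightarrow> complex ^ 'd ^ 'd"
    and M :: "'o::finite \<Rightarrow> complex ^ 'd ^ 'd"
    and \<theta> :: "real ^ 'p"
  assumes E_diff: "\<And>k t. E k differentiable (at t)"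
    and E_kraus: "\<And>t. kraus (\<lambda>k. E k t)"
    and psi_norm: "norm \<psi>0 = 1"
    and U_diff: "\<And>k t. U k differentiable (at t)"
    and U_kraus: "\<And>t. kraus (\<lambda>k. U k t)"
    and U_same: "\<And>t \<rho>. channel (\<lambda>k. U k t) \<rho> = channel (\<lambda>k. E k t) \<rho>"
    and U_canon: "\<And>t j k. mtrace (U k t ** outer \<psi>0 \<psi>0 ** adj (U j t))
                     = (if j = k then complex_of_real (p k t) else 0)"
    and w_diff: "\<And>k t. w k differentiable (at t)"
    and w_onb: "\<And>t j k. cinner (w j t) (w k t) = (if j = k then 1 else 0)"
    and w_def: "\<And>t k. p k t > 0 \<Longrightarrow>
                   w k t = (1 / sqrt (p k t)) *\<^sub>R (U k t *v \<psi>0)"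
    and SLD: "\<And>j. adj (\<Lambda> j) = \<Lambda> j"
    and SLD_eq: "\<And>j. pd (\<lambda>t. channel (\<lambda>k. E k t) (outer \<psi>0 \<psi>0)) j \<theta>
                   = (1/2) *\<^sub>R (channel (\<lambda>k. E k \<theta>) (outer \<psi>0 \<psi>0) ** \<Lambda> j
                                 + \<Lambda> j ** channel (\<lambda>k. E k \<theta>) (outer \<psi>0 \<psi>0))"
    and M_povm: "povm M"
    and F_eq_C: "\<And>j k. fisher (\<lambda>t. channel (\<lambda>k. E k t) (outer \<psi>0 \<psi>0)) M \<theta> j k
                   = CUps U (outer \<psi>0 \<psi>0) \<theta> j k"
  shows "(\<forall>j k l. p j \<theta> > 0 \<and> p k \<theta> > 0 \<longrightarrow> cinner (pd (w j) l \<theta>) (w k \<theta>) = 0)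
       \<and> (\<exists>(M' :: 'o \<Rightarrow> complex ^ 'd ^ 'd) \<xi>. povm M' \<and>
            (\<forall>m j. msqrt (M' m) ** \<Lambda> j ** msqrt (channel (\<lambda>k. E k \<theta>) (outer \<psi>0 \<psi>0))
                 = \<xi> m j *\<^sub>R (msqrt (M' m) ** msqrt (channel (\<lambda>k. E k \<theta>) (outer \<psi>0 \<psi>0)))))"
proof -
  interpret canonical_kraus_family U \<psi>0 p w
    using U_diff U_canon w_diff w_onb w_def by unfold_locales
  have rho_E: "(\<lambda>t. channel (\<lambda>k. E k t) (outer \<psi>0 \<psi>0)) = rho"
    using U_same by (simp add: fun_eq_iff rho_def)
  interpret fisher_saturating U \<psi>0 p w M \<theta>
    using M_povm F_eq_C by unfold_locales (simp_all add: rho_E)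
  show ?thesis
    using cinner_pd_w_eq_0 M_povm msqrt_M_sld_msqrt_rho SLD_eq
    by (auto simp: rho_E fun_cong[OF rho_E] intro!: exI[of _ "\<lambda>m j. 2 * coeff j m"])
qed

end
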